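(* Let $G$ be a finite group and $\rho:G\to GL(V)$ a finite-dimensional representation over an algebraically closed field $\mathbb{F}$ of characteristic $p$. Let $N$ be the subgroup of $G$ generated by the $p$-regular elements of $\ker\rho$. Then $N$ is normal in $G$, and $\rho$ factors through a representation $\overline\rho:G/N\to GL(V)$ which is tensor-rich (as an $\mathbb{F}[G/N]$-module).
   Context: An element of a finite group is $p$-regular if its order is invertible in $\mathbb{F}$. For a group $H$, an $\mathbb{F}H$-module $W$ is rich if every simple $\mathbb{F}H$-module occurs as a composition factor of $W$, and tensor-rich if $\bigoplus_{k=0}^tW^{\otimes k}$ is rich for some positive integer $t$ (with $H$ acting diagonally on tensor products over $\mathbb{F}$ and trivially on $W^{\otimes0}=\mathbb{F}$). *)

theory Defs
  imports "HOL-Algebra.Algebra" "Jordan_Normal_Form.Matrix" "HOL-Computational_Algebra.Polynomial"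
begin

definition alg_closed :: "'f::field itself \<Rightarrow> bool" where
  "alg_closed _ \<longleftrightarrow> (\<forall>q::'f poly. degree q > 0 \<longrightarrow> (\<exists>x. poly q x = 0))"

definition is_rep :: "('g,'b) monoid_scheme \<Rightarrow> nat \<Rightarrow> ('g \<Rightarrow> 'f::field mat) \<Rightarrow> bool" where
  "is_rep H n \<sigma> \<longleftrightarrow>
     (\<forall>g\<in>carrier H. \<sigma> g \<in> carrier_mat n n) \<and>
     \<sigma> \<one>\<^bsub>H\<^esub> = 1\<^sub>m n \<and>
     (\<forall>g\<in>carrier H. \<forall>h\<in>carrier H. \<sigma> (g \<otimes>\<^bsub>H\<^esub> h) = \<sigma> g * \<sigma> h)"

definition subsp :: "nat \<Rightarrow> 'f::field vec set \<Rightarrow> bool" where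
  "subsp n U \<longleftrightarrow> U \<subseteq> carrier_vec n \<and> 0\<^sub>v n \<in> U \<and>
     (\<forall>u\<in>U. \<forall>v\<in>U. u + v \<in> U) \<and> (\<forall>c. \<forall>u\<in>U. c \<cdot>\<^sub>v u \<in> U)"

definition submodule_rep :: "('g,'b) monoid_scheme \<Rightarrow> nat \<Rightarrow> ('g \<Rightarrow> 'f::field mat) \<Rightarrow> 'f vec set \<Rightarrow> bool" where
  "submodule_rep H n \<sigma> U \<longleftrightarrow> subsp n U \<and> (\<forall>g\<in>carrier H. \<forall>u\<in>U. \<sigma> g *\<^sub>v u \<in> U)"

definition simple_rep :: "('g,'b) monoid_scheme \<Rightarrow> nat \<Rightarrow> ('g \<Rightarrow> 'f::field mat) \<Rightarrow> bool" where
  "simple_rep H d S \<longleftrightarrow> is_rep H d S \<and> d > 0 \<and>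
     (\<forall>U. submodule_rep H d S U \<longrightarrow> U = {0\<^sub>v d} \<or> U = carrier_vec d)"

definition subquotient_iso ::
  "('g,'b) monoid_scheme \<Rightarrow> nat \<Rightarrow> ('g \<Rightarrow> 'f::field mat) \<Rightarrow> 'f vec set \<Rightarrow> 'f vec set \<Rightarrow>
   nat \<Rightarrow> ('g \<Rightarrow> 'f mat) \<Rightarrow> bool" where
  "subquotient_iso H n \<sigma> U U' d S \<longleftrightarrow>
     submodule_rep H n \<sigma> U \<and> submodule_rep H n \<sigma> U' \<and> U \<subseteq> U' \<and>
     (\<exists>\<phi>. \<phi> ` U' = carrier_vec d \<and>
          (\<forall>u\<in>U'. \<forall>v\<in>U'. \<phi> (u + v) = \<phi> u + \<phi> v) \<and>
          (\<forall>c. \<forall>u\<in>U'. \<phi> (c \<cdot>\<^sub>v u) = c \<cdot>\<^sub>v \<phi> u) \<and>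
          {u\<in>U'. \<phi> u = 0\<^sub>v d} = U \<and>
          (\<forall>g\<in>carrier H. \<forall>u\<in>U'. \<phi> (\<sigma> g *\<^sub>v u) = S g *\<^sub>v \<phi> u))"

definition composition_factor ::
  "('g,'b) monoid_scheme \<Rightarrow> nat \<Rightarrow> ('g \<Rightarrow> 'f::field mat) \<Rightarrow> nat \<Rightarrow> ('g \<Rightarrow> 'f mat) \<Rightarrow> bool" where
  "composition_factor H n \<sigma> d S \<longleftrightarrow> simple_rep H d S \<and> (\<exists>U U'. subquotient_iso H n \<sigma> U U' d S)"

definition rich :: "('g,'b) monoid_scheme \<Rightarrow> nat \<Rightarrow> ('g \<Rightarrow> 'f::field mat) \<Rightarrow> bool" where
  "rich H n \<sigma> \<longleftrightarrow> (\<forall>d (S::'g \<Rightarrow> 'f mat). simple_rep H d S \<longrightarrow> composition_factor H n \<sigma> d S)"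

definition kron :: "'f::field mat \<Rightarrow> 'f mat \<Rightarrow> 'f mat" where
  "kron A B = mat (dim_row A * dim_row B) (dim_col A * dim_col B)
     (\<lambda>(i,j). A $$ (i div dim_row B, j div dim_col B) * B $$ (i mod dim_row B, j mod dim_col B))"

fun tensor_pow :: "('g \<Rightarrow> 'f::field mat) \<Rightarrow> nat \<Rightarrow> 'g \<Rightarrow> 'f mat" where
  "tensor_pow \<sigma> 0 = (\<lambda>g. 1\<^sub>m 1)"
| "tensor_pow \<sigma> (Suc k) = (\<lambda>g. kron (tensor_pow \<sigma> k g) (\<sigma> g))"

definition dsum :: "('g \<Rightarrow> 'f::field mat) \<Rightarrow> nat \<Rightarrow> ('g \<Rightarrow> 'f mat) \<Rightarrow> nat \<Rightarrow> 'g \<Rightarrow> 'f mat" where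
  "dsum \<sigma> n \<tau> m = (\<lambda>g. four_block_mat (\<sigma> g) (0\<^sub>m n m) (0\<^sub>m m n) (\<tau> g))"

fun tensor_sum :: "('g \<Rightarrow> 'f::field mat) \<Rightarrow> nat \<Rightarrow> nat \<Rightarrow> 'g \<Rightarrow> 'f mat" where
  "tensor_sum \<sigma> n 0 = tensor_pow \<sigma> 0"
| "tensor_sum \<sigma> n (Suc t) =
     dsum (tensor_sum \<sigma> n t) (\<Sum>k\<le>t. n ^ k) (tensor_pow \<sigma> (Suc t)) (n ^ Suc t)"

definition tensor_rich :: "('g,'b) monoid_scheme \<Rightarrow> nat \<Rightarrow> ('g \<Rightarrow> 'f::field mat) \<Rightarrow> bool" where
  "tensor_rich H n \<sigma> \<longleftrightarrow> (\<exists>t>0. rich H (\<Sum>k\<le>t. n ^ k) (tensor_sum \<sigma> n t))"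

end

theory Submission
  imports Defs "HOL-Number_Theory.Cong"
begin

text \<open>
  Let \<open>K\<close> be the kernel of the induced representation \<open>W\<close> of \<open>G/N\<close>. Every element of \<open>K\<close> has
  \<open>p\<close>-power order, since its \<open>p\<close>-regular part lies in \<open>N\<close>. A \<open>p\<close>-group acting on a nonzero
  \<open>\<bbbF>\<close>-space in characteristic \<open>p\<close> fixes a nonzero vector (count fixed points modulo \<open>p\<close> on a
  finite \<open>\<bbbF>\<^sub>p\<close>-span of an orbit), so the fixed vectors of the normal subgroup \<open>K\<close> in a simple
  module \<open>S\<close> form a nonzero submodule: \<open>K\<close> acts trivially on every simple module.

  Hence \<open>S\<close> is a module for the finite matrix group \<open>R = \<rho>(G)\<close>. On a finite set of matrices the
  entries of the tensor powers \<open>W\<^sup>\<otimes>\<^sup>k\<close>, \<open>k \<le> |R| - 1\<close>, span all functions, since polynomials in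
  the matrix entries separate points. Consequently, for suitable \<open>l\<close> and \<open>v\<close>, the equivariant map
  \<open>u \<mapsto> \<Sum>\<^bsub>M\<in>R\<^esub> l(M u) S(M)\<^sup>-\<^sup>1 v\<close> from \<open>\<Oplus>\<^sub>k\<^sub>\<le>\<^sub>t W\<^sup>\<otimes>\<^sup>k\<close> to \<open>S\<close> is nonzero, hence onto, and
  \<open>S\<close> is a composition factor.
\<close>

section \<open>Kronecker products and tensor powers\<close>

lemma sum_lessThan_mult:
  "(\<Sum>k<a*b. f k) = (\<Sum>x<a. \<Sum>y<b. f (x*b + y))" for f :: "nat \<Rightarrow> 'a::comm_monoid_add"
proof -
  have "(\<Sum>y<b. f (x*b + y)) = sum f {x*b..<x*b + b}" for x
    using sum.shift_bounds_nat_ivl[of f 0 "x*b" b] by (simp add: atLeast0LessThan add.commute)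
  then show ?thesis
    by (simp add: sum.nat_group mult.commute[of a b])
qed

lemma mult_add_less_mult: "I < m \<Longrightarrow> i < n \<Longrightarrow> I*n + i < m*n" for I i m n :: nat
proof -
  assume "I < m" "i < n"
  then have "I*n + i < Suc I * n" by simp
  also have "\<dots> \<le> m*n" using \<open>I < m\<close> by (intro mult_le_mono1) simp
  finally show ?thesis .
qed

lemma sum_lessThan_power_add_le:
  "k \<le> t \<Longrightarrow> (\<Sum>l<k. n^l) + n^k \<le> (\<Sum>l\<le>t. n^l)" for n :: nat
proof -
  assume "k \<le> t"
  have "(\<Sum>l<k. n^l) + n^k = (\<Sum>l<Suc k. n^l)" by simp
  also have "\<dots> \<le> (\<Sum>l\<le>t. n^l)" using \<open>k \<le> t\<close> by (intro sum_mono2) auto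
  finally show ?thesis .
qed

lemma index_kron:
  assumes "A \<in> carrier_mat a a'" "B \<in> carrier_mat b b'" "i < a*b" "j < a'*b'"
  shows "kron A B $$ (i, j) = A $$ (i div b, j div b') * B $$ (i mod b, j mod b')"
  using assms by (auto simp: kron_def)

lemma kron_mult:
  assumes A: "A \<in> carrier_mat a a'" and B: "B \<in> carrier_mat b b'"
    and C: "C \<in> carrier_mat a' c" and D: "D \<in> carrier_mat b' d"
  shows "kron A B * kron C D = kron (A * C) (B * D)"
proof (rule eq_matI)
  fix i j assume "i < dim_row (kron (A * C) (B * D))" "j < dim_col (kron (A * C) (B * D))"
  then have i: "i < a*b" and j: "j < c*d" using assms by (auto simp: kron_def)
  then have "b > 0" "d > 0" by (auto intro: gr0I)
  then have ij: "i div b < a" "i mod b < b" "j div d < c" "j mod d < d"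
    using i j by (auto simp: less_mult_imp_div_less)
  have "(kron A B * kron C D) $$ (i, j) = (\<Sum>k<a'*b'. kron A B $$ (i, k) * kron C D $$ (k, j))"
    using assms i j by (simp add: kron_def scalar_prod_def times_mat_def atLeast0LessThan)
  also have "\<dots> = (\<Sum>x<a'. \<Sum>y<b'. kron A B $$ (i, x*b' + y) * kron C D $$ (x*b' + y, j))"
    by (rule sum_lessThan_mult)
  also have "\<dots> = (\<Sum>x<a'. \<Sum>y<b'. (A $$ (i div b, x) * C $$ (x, j div d)) *
                                        (B $$ (i mod b, y) * D $$ (y, j mod d)))"
  proof (intro sum.cong refl)
    fix x y assume "x \<in> {..<a'}" "y \<in> {..<b'}"
    then have "x*b' + y < a'*b'" "(x*b' + y) div b' = x" "(x*b' + y) mod b' = y"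
      by (auto simp: mult_add_less_mult)
    then show "kron A B $$ (i, x*b' + y) * kron C D $$ (x*b' + y, j) =
        (A $$ (i div b, x) * C $$ (x, j div d)) * (B $$ (i mod b, y) * D $$ (y, j mod d))"
      using index_kron[OF A B i] index_kron[OF C D _ j] by (simp add: ac_simps)
  qed
  also have "\<dots> = (\<Sum>x<a'. A $$ (i div b, x) * C $$ (x, j div d)) *
                  (\<Sum>y<b'. B $$ (i mod b, y) * D $$ (y, j mod d))"
    by (simp add: sum_product)
  also have "\<dots> = kron (A * C) (B * D) $$ (i, j)"
    using assms i j ij by (simp add: kron_def scalar_prod_def times_mat_def atLeast0LessThan)
  finally show "(kron A B * kron C D) $$ (i, j) = kron (A * C) (B * D) $$ (i, j)" .
qed (use assms in \<open>auto simp: kron_def\<close>)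

lemma kron_one: "kron (1\<^sub>m a) (1\<^sub>m b) = 1\<^sub>m (a*b)"
proof (rule eq_matI)
  fix i j assume "i < dim_row (1\<^sub>m (a*b))" "j < dim_col (1\<^sub>m (a*b))"
  then have i: "i < a*b" and j: "j < a*b" by auto
  then have "b > 0" by (auto intro: gr0I)
  then have "i div b < a" "j div b < a" "i mod b < b" "j mod b < b"
    using i j by (auto simp: less_mult_imp_div_less)
  moreover have "(i div b = j div b \<and> i mod b = j mod b) = (i = j)"
    by (metis div_mult_mod_eq)
  ultimately show "kron (1\<^sub>m a) (1\<^sub>m b) $$ (i, j) = 1\<^sub>m (a*b) $$ (i, j)"
    using i j by (auto simp: kron_def)
qed (auto simp: kron_def)

lemma tensor_pow_apply: "tensor_pow \<sigma> k g = tensor_pow (\<lambda>M. M) k (\<sigma> g)"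
  by (induction k) auto

lemma tensor_pow_carrier: "M \<in> carrier_mat n n \<Longrightarrow> tensor_pow (\<lambda>M. M) k M \<in> carrier_mat (n^k) (n^k)"
  by (induction k) (auto simp: kron_def mult.commute)

lemma tensor_pow_mult:
  assumes "A \<in> carrier_mat n n" "B \<in> carrier_mat n n"
  shows "tensor_pow (\<lambda>M. M) k (A * B) = tensor_pow (\<lambda>M. M) k A * tensor_pow (\<lambda>M. M) k B"
proof (induction k)
  case (Suc k)
  then show ?case
    using kron_mult[OF tensor_pow_carrier[OF assms(1)] assms(1) tensor_pow_carrier[OF assms(2)] assms(2)]
    by simp
qed simp

lemma tensor_pow_one: "tensor_pow (\<lambda>M. M) k (1\<^sub>m n) = 1\<^sub>m (n^k)"
  by (induction k) (simp_all add: kron_one mult.commute)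

lemma index_tensor_pow_Suc:
  assumes "M \<in> carrier_mat n n" "I < n^k" "J < n^k" "i < n" "j < n"
  shows "tensor_pow (\<lambda>M. M) (Suc k) M $$ (I*n + i, J*n + j) = tensor_pow (\<lambda>M. M) k M $$ (I, J) * M $$ (i, j)"
  using assms by (simp add: index_kron[OF tensor_pow_carrier] mult_add_less_mult)

lemma mult_four_block_diag:
  assumes "A \<in> carrier_mat a a" "B \<in> carrier_mat b b" "C \<in> carrier_mat a a" "D \<in> carrier_mat b b"
  shows "four_block_mat A (0\<^sub>m a b) (0\<^sub>m b a) B * four_block_mat C (0\<^sub>m a b) (0\<^sub>m b a) D =
    four_block_mat (A * C) (0\<^sub>m a b) (0\<^sub>m b a) (B * D)"
  using assms mult_four_block_mat[of A a a "0\<^sub>m a b" b "0\<^sub>m b a" b B C a "0\<^sub>m a b" b "0\<^sub>m b a" D]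
  by simp

lemma tensor_sum_apply: "tensor_sum \<sigma> n t g = tensor_sum (\<lambda>M. M) n t (\<sigma> g)"
  by (induction t) (auto simp: dsum_def tensor_pow_apply[of \<sigma> _ g])

lemma tensor_sum_carrier:
  assumes "M \<in> carrier_mat n n"
  shows "tensor_sum (\<lambda>M. M) n t M \<in> carrier_mat (\<Sum>k\<le>t. n^k) (\<Sum>k\<le>t. n^k)"
proof (induction t)
  case (Suc t)
  have "tensor_sum (\<lambda>M. M) n (Suc t) M \<in> carrier_mat ((\<Sum>k\<le>t. n^k) + n^Suc t) ((\<Sum>k\<le>t. n^k) + n^Suc t)"
    unfolding tensor_sum.simps dsum_def by (rule four_block_carrier_mat[OF Suc tensor_pow_carrier[OF assms]])
  then show ?case by simp
qed simp

lemma tensor_sum_mult: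
  assumes "A \<in> carrier_mat n n" "B \<in> carrier_mat n n"
  shows "tensor_sum (\<lambda>M. M) n t (A * B) = tensor_sum (\<lambda>M. M) n t A * tensor_sum (\<lambda>M. M) n t B"
proof (induction t)
  case (Suc t)
  show ?case
    unfolding tensor_sum.simps dsum_def Suc tensor_pow_mult[OF assms]
    by (rule mult_four_block_diag[symmetric, OF tensor_sum_carrier[OF assms(1)] tensor_pow_carrier[OF assms(1)]
        tensor_sum_carrier[OF assms(2)] tensor_pow_carrier[OF assms(2)]])
qed (simp add: tensor_pow_mult[OF assms])

lemma tensor_sum_one: "tensor_sum (\<lambda>M. M) n t (1\<^sub>m n) = 1\<^sub>m (\<Sum>k\<le>t. n^k)"
proof (induction t)
  case (Suc t)
  show ?case
    unfolding tensor_sum.simps dsum_def Suc tensor_pow_one by simp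
qed simp

lemma index_tensor_sum:
  assumes M: "M \<in> carrier_mat n n" and "k \<le> t" "I < n^k" "J < n^k"
  shows "tensor_sum (\<lambda>M. M) n t M $$ ((\<Sum>l<k. n^l) + I, (\<Sum>l<k. n^l) + J) = tensor_pow (\<lambda>M. M) k M $$ (I, J)"
  using assms(2-)
proof (induction t)
  case (Suc t)
  note carriers = tensor_sum_carrier[OF M, of t] tensor_pow_carrier[OF M, of "Suc t"]
  show ?case
  proof (cases "k \<le> t")
    case True
    then show ?thesis
      using Suc sum_lessThan_power_add_le[OF True, of n] carriers by (simp add: dsum_def)
  next
    case False
    then have "k = Suc t" using Suc.prems by simp
    then show ?thesis
      using Suc.prems carriers by (simp add: dsum_def lessThan_Suc_atMost)
  qed
qed (use M in simp)

section \<open>Polynomials in the matrix entries\<close>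

text \<open>\<open>poly_in_entries n k f\<close>: on \<open>n \<times> n\<close> matrices, \<open>f\<close> is a linear combination of entries of
  tensor powers of degree at most \<open>k\<close>, i.e.\ a polynomial of degree at most \<open>k\<close> in the matrix entries.\<close>

inductive poly_in_entries :: "nat \<Rightarrow> nat \<Rightarrow> ('f::field mat \<Rightarrow> 'f) \<Rightarrow> bool" for n where
  entry: "k' \<le> k \<Longrightarrow> I < n^k' \<Longrightarrow> J < n^k' \<Longrightarrow> poly_in_entries n k (\<lambda>M. tensor_pow (\<lambda>M. M) k' M $$ (I, J))"
| add: "poly_in_entries n k f \<Longrightarrow> poly_in_entries n k g \<Longrightarrow> poly_in_entries n k (\<lambda>M. f M + g M)"
| smult: "poly_in_entries n k f \<Longrightarrow> poly_in_entries n k (\<lambda>M. c * f M)"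
| cong: "poly_in_entries n k f \<Longrightarrow> (\<And>M. M \<in> carrier_mat n n \<Longrightarrow> g M = f M) \<Longrightarrow> poly_in_entries n k g"

lemma poly_in_entries_const: "poly_in_entries n k (\<lambda>M. c)"
proof -
  have "poly_in_entries n k (\<lambda>M. c * tensor_pow (\<lambda>M. M) 0 M $$ (0, 0))"
    by (intro poly_in_entries.smult poly_in_entries.entry) auto
  then show ?thesis by (rule poly_in_entries.cong) simp
qed

lemma poly_in_entries_mono: "poly_in_entries n k f \<Longrightarrow> k \<le> k' \<Longrightarrow> poly_in_entries n k' f"
  by (induction rule: poly_in_entries.induct) (auto intro: poly_in_entries.intros)

lemma poly_in_entries_mult_entry:
  assumes "poly_in_entries n k f" "i < n" "j < n"
  shows "poly_in_entries n (Suc k) (\<lambda>M. f M * M $$ (i, j))"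
  using assms(1)
proof (induction rule: poly_in_entries.induct)
  case (entry k' k I J)
  have "poly_in_entries n (Suc k) (\<lambda>M. tensor_pow (\<lambda>M. M) (Suc k') M $$ (I*n + i, J*n + j))"
    using entry assms mult_add_less_mult[of I "n^k'" i n] mult_add_less_mult[of J "n^k'" j n]
    by (intro poly_in_entries.entry) (auto simp: mult.commute)
  then show ?case
    by (rule poly_in_entries.cong) (metis index_tensor_pow_Suc entry.hyps(2,3) assms(2,3))
next
  case (add k f g)
  have "poly_in_entries n (Suc k) (\<lambda>M. f M * M $$ (i, j) + g M * M $$ (i, j))"
    using add.IH by (rule poly_in_entries.add)
  then show ?case by (rule poly_in_entries.cong) (simp add: algebra_simps)
next
  case (smult k f c)
  have "poly_in_entries n (Suc k) (\<lambda>M. c * (f M * M $$ (i, j)))"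
    using smult.IH by (rule poly_in_entries.smult)
  then show ?case by (rule poly_in_entries.cong) (simp add: algebra_simps)
qed (auto intro: poly_in_entries.cong)

lemma poly_in_entries_prod:
  assumes "finite Z" "\<And>x. x \<in> Z \<Longrightarrow> i x < n \<and> j x < n"
  shows "poly_in_entries n (card Z) (\<lambda>M. \<Prod>x\<in>Z. (M $$ (i x, j x) - a x) * b x)"
  using assms
proof (induction Z rule: finite_induct)
  case empty
  show ?case using poly_in_entries_const[of n 0 1] by simp
next
  case (insert x Z)
  let ?f = "\<lambda>M. \<Prod>x\<in>Z. (M $$ (i x, j x) - a x) * b x"
  have f: "poly_in_entries n (card Z) ?f" using insert by auto
  have "poly_in_entries n (Suc (card Z)) (\<lambda>M. b x * (?f M * M $$ (i x, j x)) + (- a x * b x) * ?f M)"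
    using insert
    by (intro poly_in_entries.add poly_in_entries.smult poly_in_entries_mult_entry f
        poly_in_entries_mono[OF f]) auto
  then show ?case
    using insert by (simp add: poly_in_entries.cong algebra_simps)
qed

lemma poly_in_entries_indicator:
  assumes "finite R" "R \<subseteq> carrier_mat n n" "M\<^sub>0 \<in> R"
  obtains f where "poly_in_entries n (card R - 1) f" "f M\<^sub>0 = 1" "\<And>M. M \<in> R \<Longrightarrow> M \<noteq> M\<^sub>0 \<Longrightarrow> f M = 0"
proof -
  have "\<exists>i j. i < n \<and> j < n \<and> M $$ (i, j) \<noteq> M\<^sub>0 $$ (i, j)" if "M \<in> R - {M\<^sub>0}" for M
  proof (rule ccontr)
    assume "\<not> ?thesis"
    moreover have "M \<in> carrier_mat n n" "M\<^sub>0 \<in> carrier_mat n n" using that assms by auto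
    ultimately have "M = M\<^sub>0" by (intro eq_matI) auto
    then show False using that by simp
  qed
  then obtain i j where ij: "\<And>M. M \<in> R - {M\<^sub>0} \<Longrightarrow>
      i M < n \<and> j M < n \<and> M $$ (i M, j M) \<noteq> M\<^sub>0 $$ (i M, j M)"
    by metis
  define f where "f M = (\<Prod>M'\<in>R - {M\<^sub>0}. (M $$ (i M', j M') - M' $$ (i M', j M')) *
      inverse (M\<^sub>0 $$ (i M', j M') - M' $$ (i M', j M')))" for M
  show ?thesis
  proof
    show "poly_in_entries n (card R - 1) f"
      unfolding f_def using assms ij poly_in_entries_prod[of "R - {M\<^sub>0}" i n j] by simp
    show "f M\<^sub>0 = 1"
      unfolding f_def
    proof (intro prod.neutral ballI)
      fix M assume "M \<in> R - {M\<^sub>0}"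
      then have "M\<^sub>0 $$ (i M, j M) - M $$ (i M, j M) \<noteq> 0" using ij by force
      then show "(M\<^sub>0 $$ (i M, j M) - M $$ (i M, j M)) * inverse (M\<^sub>0 $$ (i M, j M) - M $$ (i M, j M)) = 1"
        by simp
    qed
    show "f M = 0" if "M \<in> R" "M \<noteq> M\<^sub>0" for M
      unfolding f_def using that assms by (intro prod_zero bexI[of _ M]) auto
  qed
qed

lemma poly_in_entries_orthogonal:
  assumes "poly_in_entries n k f" "k \<le> t" "R \<subseteq> carrier_mat n n"
    and "\<And>k' I J. k' \<le> t \<Longrightarrow> I < n^k' \<Longrightarrow> J < n^k' \<Longrightarrow>
      (\<Sum>M\<in>R. tensor_pow (\<lambda>M. M) k' M $$ (I, J) * y M) = 0"
  shows "(\<Sum>M\<in>R. f M * y M) = 0"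
  using assms(1,2)
proof (induction rule: poly_in_entries.induct)
  case (cong k f g)
  have "(\<Sum>M\<in>R. g M * y M) = (\<Sum>M\<in>R. f M * y M)"
    using cong.hyps(2) assms(3) by (intro sum.cong) auto
  then show ?case using cong by simp
qed (use assms(4) in \<open>auto simp: algebra_simps sum.distrib mult.assoc simp flip: sum_distrib_left\<close>)

text \<open>Polynomials in the entries separate the points of a finite set of matrices.\<close>

lemma orthogonal_tensor_entries_imp_zero:
  assumes "finite R" "R \<subseteq> carrier_mat n n" "card R \<le> Suc t" "M\<^sub>0 \<in> R"
    and "\<And>k I J. k \<le> t \<Longrightarrow> I < n^k \<Longrightarrow> J < n^k \<Longrightarrow>
      (\<Sum>M\<in>R. tensor_pow (\<lambda>M. M) k M $$ (I, J) * y M) = 0"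
  shows "y M\<^sub>0 = 0"
proof -
  obtain f where f: "poly_in_entries n (card R - 1) f" "f M\<^sub>0 = 1"
    and f0: "\<And>M. M \<in> R \<Longrightarrow> M \<noteq> M\<^sub>0 \<Longrightarrow> f M = 0"
    using poly_in_entries_indicator[OF assms(1,2,4)] by blast
  have "(\<Sum>M\<in>R. f M * y M) = 0"
    using assms(3) by (intro poly_in_entries_orthogonal[OF f(1) _ assms(2,5)]) auto
  moreover have "(\<Sum>M\<in>R. f M * y M) = f M\<^sub>0 * y M\<^sub>0 + (\<Sum>M\<in>R - {M\<^sub>0}. f M * y M)"
    using assms(1,4) by (rule sum.remove)
  moreover have "(\<Sum>M\<in>R - {M\<^sub>0}. f M * y M) = 0"
    using f0 by (intro sum.neutral) auto
  ultimately show ?thesis using f(2) by simp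
qed

section \<open>Elements of prime power order\<close>

lemma (in group) conj_nat_pow:
  assumes "g \<in> carrier G" "x \<in> carrier G"
  shows "(g \<otimes> x \<otimes> inv g) [^] (k::nat) = g \<otimes> x [^] k \<otimes> inv g"
proof (induction k)
  case (Suc k)
  have cancel: "inv g \<otimes> (g \<otimes> y) = y" if "y \<in> carrier G" for y
    using assms that by (simp add: m_assoc[symmetric])
  show ?case
    using Suc assms by (simp add: m_assoc cancel)
qed (use assms in simp)

lemma (in group) ord_conj:
  assumes g: "g \<in> carrier G" and x: "x \<in> carrier G"
  shows "ord (g \<otimes> x \<otimes> inv g) = ord x"
proof -
  have "(g \<otimes> x \<otimes> inv g) [^] k = \<one> \<longleftrightarrow> x [^] k = \<one>" for k :: nat
    using g x by (simp add: conj_nat_pow inv_solve_right')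
  then show ?thesis
    using g x by (simp add: ord_unique pow_eq_id)
qed

lemma (in group) ord_subgroup:
  assumes "subgroup K G" "x \<in> K"
  shows "group.ord (G\<lparr>carrier := K\<rparr>) x = ord x"
proof -
  interpret K: group "G\<lparr>carrier := K\<rparr>" by (rule subgroup_imp_group[OF assms(1)])
  have "x \<in> carrier G" using assms subgroup.subset by blast
  then show ?thesis
    using assms by (simp add: K.ord_unique pow_eq_id flip: nat_pow_consistent)
qed

text \<open>\<open>x [^] p\<^sup>a\<close>, with \<open>p\<^sup>a\<close> the exact power of \<open>p\<close> dividing \<open>ord x\<close>, is the \<open>p\<close>-regular part of \<open>x\<close>.\<close>

lemma (in group) not_dvd_ord_pow_multiplicity:
  fixes p :: nat
  assumes "finite (carrier G)" "x \<in> carrier G" "p \<noteq> 1"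
  shows "\<not> p dvd ord (x [^] (p ^ multiplicity p (ord x)))"
proof -
  have "ord x > 0" using ord_ge_1[OF assms(1,2)] by simp
  moreover have "p ^ multiplicity p (ord x) dvd ord x" by (rule multiplicity_dvd)
  ultimately have "p ^ multiplicity p (ord x) \<noteq> 0" by (metis dvd_0_left_iff less_not_refl)
  with \<open>p ^ multiplicity p (ord x) dvd ord x\<close> have "ord (x [^] (p ^ multiplicity p (ord x))) = ord x div p ^ multiplicity p (ord x)"
    using assms(2) by (intro ord_pow) auto
  then show ?thesis
    using multiplicity_decompose[of "ord x" p] \<open>ord x > 0\<close> assms(3) by simp
qed

lemma dvd_CHAR_power_imp_CHAR_power:
  assumes "k dvd CHAR('f::field) ^ a" "CHAR('f) ^ a \<noteq> 0"
  shows "\<exists>b. k = CHAR('f) ^ b"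
proof (cases "CHAR('f) = 0")
  case True
  then show ?thesis using assms by (intro exI[of _ 0]) (simp add: power_0_left split: if_splits)
next
  case False
  then obtain b where "normalize k = CHAR('f) ^ b"
    using divides_primepow[OF prime_CHAR_semidom assms(1)] by blast
  then show ?thesis by auto
qed

lemma (in group) prime_dvd_order_p_group:
  fixes p q :: nat
  assumes fin: "finite (carrier G)" and p: "Factorial_Ring.prime p" and q: "Factorial_Ring.prime q"
    and ord_p: "\<And>x. x \<in> carrier G \<Longrightarrow> \<exists>a. ord x = p ^ a"
    and "q dvd Coset.order G"
  shows "q = p"
proof (rule ccontr)
  assume "q \<noteq> p"
  define a where "a = multiplicity q (Coset.order G)"
  have "Coset.order G = q ^ a * (Coset.order G div q ^ a)"
    unfolding a_def by (simp add: multiplicity_dvd)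
  then obtain Q where Q: "subgroup Q G" and card_Q: "card Q = q ^ a"
    using sylow_thm[OF q is_group _ fin] by blast
  interpret Q: group "G\<lparr>carrier := Q\<rparr>" by (rule subgroup_imp_group[OF Q])
  have "Coset.order G \<noteq> 0" using fin order_gt_0_iff_finite by auto
  then have "a > 0"
    unfolding a_def using \<open>q dvd Coset.order G\<close> q by (simp add: prime_multiplicity_gt_zero_iff)
  then have "card Q > 1" using card_Q q by (metis one_less_power prime_gt_1_nat)
  then have "Q \<noteq> {\<one>}" by auto
  then obtain x where x: "x \<in> Q" "x \<noteq> \<one>" using subgroup.one_closed[OF Q] by blast
  then have xG: "x \<in> carrier G" using Q subgroup.subset by blast
  have "ord x dvd q ^ a"
    using Q.ord_dvd_group_order[of x] x ord_subgroup[OF Q] card_Q by (simp add: Coset.order_def)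
  moreover obtain b where "ord x = p ^ b" using ord_p xG by blast
  ultimately have "p ^ b dvd q ^ a" by simp
  have "b = 0"
  proof (rule ccontr)
    assume "b \<noteq> 0"
    then have "p dvd q ^ a" using \<open>p ^ b dvd q ^ a\<close> dvd_power dvd_trans by blast
    then have "p dvd q" using p prime_dvd_power by blast
    then show False using \<open>q \<noteq> p\<close> p q primes_dvd_imp_eq by blast
  qed
  then have "ord x = 1" using \<open>ord x = p ^ b\<close> by simp
  then show False using ord_eq_1 xG x by simp
qed

lemma (in group_action) p_group_prime_dvd_card_orbit:
  fixes p :: nat
  assumes "finite (carrier G)" and p: "Factorial_Ring.prime p"
    and ord_p: "\<And>x. x \<in> carrier G \<Longrightarrow> \<exists>a. group.ord G x = p ^ a"
    and "w \<in> E" and card: "card (orbit G \<phi> w) \<noteq> 1"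
  shows "p dvd card (orbit G \<phi> w)"
proof -
  have "card (orbit G \<phi> w) dvd Coset.order G"
    using orbit_stabilizer_theorem[OF \<open>w \<in> E\<close>] by (metis dvd_triv_left)
  moreover obtain q where q: "Factorial_Ring.prime q" "q dvd card (orbit G \<phi> w)"
    using prime_factor_nat[OF card] by blast
  ultimately have "q dvd Coset.order G" by (metis dvd_trans)
  then have "q = p"
    by (intro group.prime_dvd_order_p_group[OF group_hom.axioms(1)[OF group_hom] assms(1) p q(1)] ord_p)
  then show ?thesis using q by simp
qed

text \<open>The fixed points of a \<open>p\<close>-group action are congruent to the whole set modulo \<open>p\<close>.\<close>

lemma (in group_action) p_group_another_fixed_point:
  fixes p :: nat
  assumes fin: "finite (carrier G)" "finite E" and p: "Factorial_Ring.prime p"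
    and ord_p: "\<And>x. x \<in> carrier G \<Longrightarrow> \<exists>a. group.ord G x = p ^ a"
    and "p dvd card E" "z \<in> E" "\<And>g. g \<in> carrier G \<Longrightarrow> \<phi> g z = z"
  obtains w where "w \<in> E" "w \<noteq> z" "\<And>g. g \<in> carrier G \<Longrightarrow> \<phi> g w = w"
proof -
  define fixed where "fixed = {orb \<in> orbits G E \<phi>. card orb = 1}"
  have orbit_dvd: "p dvd card orb" if "orb \<in> orbits G E \<phi>" "card orb \<noteq> 1" for orb
    using that p_group_prime_dvd_card_orbit[OF fin(1) p ord_p] unfolding orbits_def by blast
  have finite_orbits: "finite (orbits G E \<phi>)"
    unfolding orbits_def using fin(2) by (simp add: setcompr_eq_image)
  have "card E = (\<Sum>orb\<in>orbits G E \<phi>. card orb)"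
    using disjoint_sum[OF fin(2), of "\<lambda>_. 1::nat"] by simp
  also have "\<dots> = (\<Sum>orb\<in>orbits G E \<phi> - fixed. card orb) + (\<Sum>orb\<in>fixed. card orb)"
    by (rule sum.subset_diff) (auto simp: fixed_def finite_orbits)
  also have "(\<Sum>orb\<in>fixed. card orb) = card fixed"
    unfolding fixed_def by simp
  finally have "card E = (\<Sum>orb\<in>orbits G E \<phi> - fixed. card orb) + card fixed" .
  moreover have "p dvd (\<Sum>orb\<in>orbits G E \<phi> - fixed. card orb)"
    by (rule dvd_sum) (use orbit_dvd in \<open>auto simp: fixed_def\<close>)
  ultimately have "p dvd card fixed"
    using \<open>p dvd card E\<close> by (simp add: dvd_add_right_iff)
  have "orbit G \<phi> z \<subseteq> {z}"
    using assms(7) unfolding orbit_def by auto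
  then have "orbit G \<phi> z = {z}"
    using orbit_refl[OF assms(6)] by blast
  then have "{z} \<in> fixed"
    unfolding fixed_def orbits_def using assms(6) by force
  moreover have "fixed \<noteq> {{z}}"
    using \<open>p dvd card fixed\<close> p by auto
  ultimately obtain orb where orb: "orb \<in> fixed" "orb \<noteq> {z}" by blast
  then obtain w where w: "w \<in> E" "orb = orbit G \<phi> w" "card orb = 1"
    unfolding fixed_def orbits_def by auto
  then have "orbit G \<phi> w = {w}"
    using orbit_refl by (metis card_1_singletonE singletonD)
  then show ?thesis
    using that w orb unfolding orbit_def by blast
qed

section \<open>The prime subfield\<close>

definition prime_subfield :: "'f::field set" where
  "prime_subfield = range of_nat"

lemma prime_subfield_add: "a \<in> prime_subfield \<Longrightarrow> b \<in> prime_subfield \<Longrightarrow> a + b \<in> prime_subfield"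
  unfolding prime_subfield_def by (auto simp flip: of_nat_add)

lemma prime_subfield_zero: "0 \<in> prime_subfield"
  unfolding prime_subfield_def by (metis of_nat_0 rangeI)

lemma prime_subfield_uminus:
  assumes "CHAR('f::field) > 0" "(a::'f) \<in> prime_subfield"
  shows "- a \<in> prime_subfield"
proof -
  obtain j where "a = of_nat j" using assms(2) unfolding prime_subfield_def by auto
  then have "- a = of_nat ((CHAR('f) - 1) * j)"
    using assms(1) by (simp add: of_nat_diff)
  then show ?thesis unfolding prime_subfield_def by (metis rangeI)
qed

lemma prime_subfield_eq_image:
  "CHAR('f::field) > 0 \<Longrightarrow> (prime_subfield :: 'f set) = of_nat ` {..<CHAR('f)}"
proof -
  assume "CHAR('f) > 0"
  then have "(of_nat k :: 'f) \<in> of_nat ` {..<CHAR('f)}" for k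
    by (intro image_eqI[where x="k mod CHAR('f)"]) (auto simp: of_nat_eq_iff_cong_CHAR cong_def)
  then show ?thesis unfolding prime_subfield_def by auto
qed

lemma finite_prime_subfield: "CHAR('f::field) > 0 \<Longrightarrow> finite (prime_subfield :: 'f set)"
  by (simp add: prime_subfield_eq_image)

lemma card_prime_subfield: "CHAR('f::field) > 0 \<Longrightarrow> card (prime_subfield :: 'f set) = CHAR('f)"
  unfolding prime_subfield_eq_image
  by (subst card_image) (auto intro!: inj_onI simp: of_nat_eq_iff_cong_CHAR cong_less_modulus_unique_nat)

definition prime_line :: "'f::field vec \<Rightarrow> 'f vec \<Rightarrow> 'f vec set" where
  "prime_line v w = (\<lambda>c. w + c \<cdot>\<^sub>v v) ` prime_subfield"

lemma card_prime_line:
  assumes "CHAR('f::field) > 0" "v \<in> carrier_vec d" "v \<noteq> 0\<^sub>v d" "(w::'f vec) \<in> carrier_vec d"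
  shows "card (prime_line v w) = CHAR('f)"
proof -
  obtain i where i: "i < d" "v $ i \<noteq> 0"
    using assms(2,3) by (metis carrier_vecD eq_vecI index_zero_vec)
  have "inj_on (\<lambda>c. w + c \<cdot>\<^sub>v v) prime_subfield"
  proof (rule inj_onI)
    fix c c' assume "w + c \<cdot>\<^sub>v v = w + c' \<cdot>\<^sub>v v"
    then have "(w + c \<cdot>\<^sub>v v) $ i = (w + c' \<cdot>\<^sub>v v) $ i" by simp
    then show "c = c'" using i assms(2,4) by auto
  qed
  then show ?thesis
    unfolding prime_line_def by (simp add: card_image card_prime_subfield[OF assms(1)])
qed

lemma prime_line_shift:
  assumes "CHAR('f::field) > 0" "v \<in> carrier_vec d" "(w::'f vec) \<in> carrier_vec d" "a \<in> prime_subfield"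
  shows "prime_line v (w + a \<cdot>\<^sub>v v) = prime_line v w"
proof -
  have "w + a \<cdot>\<^sub>v v + c \<cdot>\<^sub>v v = w + (a + c) \<cdot>\<^sub>v v" for c
    using assms(2,3) by (intro eq_vecI) (auto simp: algebra_simps)
  moreover have "(+) a ` prime_subfield = prime_subfield"
  proof
    show "(+) a ` prime_subfield \<subseteq> prime_subfield" using assms(4) prime_subfield_add by auto
    have "c = a + (- a + c)" for c by simp
    then show "prime_subfield \<subseteq> (+) a ` prime_subfield"
      using assms(4) prime_subfield_add prime_subfield_uminus[OF assms(1)] by blast
  qed
  ultimately show ?thesis
    unfolding prime_line_def by (metis (no_types, lifting) image_cong image_image)
qed

lemma self_in_prime_line: "v \<in> carrier_vec d \<Longrightarrow> w \<in> carrier_vec d \<Longrightarrow> w \<in> prime_line v w"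
proof -
  assume "v \<in> carrier_vec d" "w \<in> carrier_vec d"
  then have "w = w + 0 \<cdot>\<^sub>v v" by (intro eq_vecI) auto
  then show ?thesis unfolding prime_line_def using prime_subfield_zero by blast
qed

text \<open>A finite set closed under translation by \<open>\<bbbF>\<^sub>p\<close>-multiples of \<open>v \<noteq> 0\<close> is partitioned into lines of
  \<open>p\<close> points each.\<close>

lemma char_dvd_card_translation_closed:
  fixes W :: "'f::field vec set"
  assumes pos: "CHAR('f) > 0" and "finite W" "W \<subseteq> carrier_vec d"
    and v: "v \<in> carrier_vec d" "v \<noteq> 0\<^sub>v d"
    and closed: "\<And>w c. w \<in> W \<Longrightarrow> c \<in> prime_subfield \<Longrightarrow> w + c \<cdot>\<^sub>v v \<in> W"
  shows "CHAR('f) dvd card W"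
proof -
  let ?lines = "prime_line v ` W"
  have "CHAR('f) * card ?lines = card (\<Union> ?lines)"
  proof (rule card_partition)
    show "finite (\<Union> ?lines)"
      unfolding prime_line_def using \<open>finite W\<close> finite_prime_subfield[OF pos] by blast
    show "L \<inter> L' = {}" if L: "L \<in> ?lines" "L' \<in> ?lines" and "L \<noteq> L'" for L L'
    proof (rule ccontr)
      obtain w w' where w: "w \<in> W" "w' \<in> W" "L = prime_line v w" "L' = prime_line v w'" using L by auto
      moreover assume "L \<inter> L' \<noteq> {}"
      ultimately obtain a a' where "a \<in> prime_subfield" "a' \<in> prime_subfield" "w + a \<cdot>\<^sub>v v = w' + a' \<cdot>\<^sub>v v"
        unfolding prime_line_def by auto
      then have "L = L'"
        using prime_line_shift[OF pos v(1)] w assms(3) by (metis subsetD)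
      then show False using \<open>L \<noteq> L'\<close> by simp
    qed
  qed (use \<open>finite W\<close> card_prime_line[OF pos v] assms(3) in auto)
  moreover have "\<Union> ?lines = W"
  proof
    show "\<Union> ?lines \<subseteq> W" using closed unfolding prime_line_def by blast
    show "W \<subseteq> \<Union> ?lines" using self_in_prime_line[OF v(1)] assms(3) by blast
  qed
  ultimately show ?thesis by (metis dvd_triv_left)
qed

section \<open>Matrix representations\<close>

lemma mult_mat_zero_vec: "A \<in> carrier_mat n m \<Longrightarrow> A *\<^sub>v 0\<^sub>v m = 0\<^sub>v n"
  by (intro eq_vecI) auto

lemma mat_eq_on_carrier_vecI:
  fixes A B :: "'a::semiring_1 mat"
  assumes "A \<in> carrier_mat n m" "B \<in> carrier_mat n m" "\<And>u. u \<in> carrier_vec m \<Longrightarrow> A *\<^sub>v u = B *\<^sub>v u"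
  shows "A = B"
proof (rule eq_matI)
  fix i j assume "i < dim_row B" "j < dim_col B"
  moreover have "A *\<^sub>v unit_vec m j = B *\<^sub>v unit_vec m j" by (rule assms(3)) simp
  ultimately show "A $$ (i, j) = B $$ (i, j)"
    using assms(1,2) by (metis carrier_matD index_mult_mat_vec row_carrier scalar_prod_right_unit index_row)
qed (use assms(1,2) in auto)

lemma unit_vec_scalar_prod_mult_mat_vec:
  fixes A :: "'a::semiring_1 mat"
  assumes "A \<in> carrier_mat m k" "i < m" "j < k"
  shows "unit_vec m i \<bullet> (A *\<^sub>v unit_vec k j) = A $$ (i, j)"
proof -
  have "unit_vec m i \<bullet> (A *\<^sub>v unit_vec k j) = (A *\<^sub>v unit_vec k j) $ i"
    using assms by (intro scalar_prod_left_unit) auto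
  also have "\<dots> = row A i \<bullet> unit_vec k j" using assms by simp
  finally show ?thesis using assms by simp
qed

lemma mult_mat_vec_lincomb:
  fixes A :: "'a::comm_semiring_0 mat"
  assumes A: "A \<in> carrier_mat m n" and u: "\<And>x. x \<in> Z \<Longrightarrow> u x \<in> carrier_vec n"
  shows "A *\<^sub>v vec n (\<lambda>i. \<Sum>x\<in>Z. c x * u x $ i) = vec m (\<lambda>i. \<Sum>x\<in>Z. c x * (A *\<^sub>v u x) $ i)"
proof (rule eq_vecI)
  fix i assume "i < dim_vec (vec m (\<lambda>i. \<Sum>x\<in>Z. c x * (A *\<^sub>v u x) $ i))"
  then have i: "i < m" by simp
  have entry: "(A *\<^sub>v w) $ i = (\<Sum>j<n. A $$ (i, j) * w $ j)" if "w \<in> carrier_vec n" for w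
    using A i that by (simp add: scalar_prod_def atLeast0LessThan)
  have "(A *\<^sub>v vec n (\<lambda>i. \<Sum>x\<in>Z. c x * u x $ i)) $ i = (\<Sum>j<n. A $$ (i, j) * (\<Sum>x\<in>Z. c x * u x $ j))"
    by (simp add: entry)
  also have "\<dots> = (\<Sum>x\<in>Z. c x * (\<Sum>j<n. A $$ (i, j) * u x $ j))"
  proof -
    have "A $$ (i, j) * (c x * u x $ j) = c x * (A $$ (i, j) * u x $ j)" for x j
      by (simp add: algebra_simps)
    then show ?thesis by (simp add: sum_distrib_left sum.swap[of _ Z])
  qed
  also have "\<dots> = (\<Sum>x\<in>Z. c x * (A *\<^sub>v u x) $ i)"
    using u by (simp add: entry)
  finally show "(A *\<^sub>v vec n (\<lambda>i. \<Sum>x\<in>Z. c x * u x $ i)) $ i = vec m (\<lambda>i. \<Sum>x\<in>Z. c x * (A *\<^sub>v u x) $ i) $ i"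
    using i by simp
qed (use A in simp)

lemma is_rep_carrier: "is_rep H n \<sigma> \<Longrightarrow> g \<in> carrier H \<Longrightarrow> \<sigma> g \<in> carrier_mat n n"
  unfolding is_rep_def by blast

lemma is_rep_one: "is_rep H n \<sigma> \<Longrightarrow> \<sigma> \<one>\<^bsub>H\<^esub> = 1\<^sub>m n"
  unfolding is_rep_def by blast

lemma is_rep_mult:
  "is_rep H n \<sigma> \<Longrightarrow> g \<in> carrier H \<Longrightarrow> h \<in> carrier H \<Longrightarrow> \<sigma> (g \<otimes>\<^bsub>H\<^esub> h) = \<sigma> g * \<sigma> h"
  unfolding is_rep_def by blast

lemma is_rep_mult_vec_carrier:
  "is_rep H n \<sigma> \<Longrightarrow> g \<in> carrier H \<Longrightarrow> u \<in> carrier_vec n \<Longrightarrow> \<sigma> g *\<^sub>v u \<in> carrier_vec n"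
  by (rule mult_mat_vec_carrier[OF is_rep_carrier])

lemma is_rep_tensor_sum:
  assumes "is_rep H n \<sigma>"
  shows "is_rep H (\<Sum>k\<le>t. n^k) (tensor_sum \<sigma> n t)"
  using assms unfolding is_rep_def
  by (simp add: tensor_sum_apply[of \<sigma>] tensor_sum_carrier tensor_sum_mult tensor_sum_one)

definition rep_hom ::
  "('g, 'b) monoid_scheme \<Rightarrow> nat \<Rightarrow> ('g \<Rightarrow> 'f::field mat) \<Rightarrow> nat \<Rightarrow> ('g \<Rightarrow> 'f mat) \<Rightarrow> ('f vec \<Rightarrow> 'f vec) \<Rightarrow> bool"
where
  "rep_hom H n \<sigma> d S \<phi> \<longleftrightarrow>
     (\<forall>u\<in>carrier_vec n. \<phi> u \<in> carrier_vec d) \<and>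
     (\<forall>u\<in>carrier_vec n. \<forall>w\<in>carrier_vec n. \<phi> (u + w) = \<phi> u + \<phi> w) \<and>
     (\<forall>a. \<forall>u\<in>carrier_vec n. \<phi> (a \<cdot>\<^sub>v u) = a \<cdot>\<^sub>v \<phi> u) \<and>
     (\<forall>g\<in>carrier H. \<forall>u\<in>carrier_vec n. \<phi> (\<sigma> g *\<^sub>v u) = S g *\<^sub>v \<phi> u)"

lemma rep_hom_zero:
  fixes \<phi> :: "'f::field vec \<Rightarrow> 'f vec"
  assumes "rep_hom H n \<sigma> d S \<phi>"
  shows "\<phi> (0\<^sub>v n) = 0\<^sub>v d"
proof -
  have "(0::'f) \<cdot>\<^sub>v 0\<^sub>v n = 0\<^sub>v n" by (intro eq_vecI) auto
  then have "\<phi> (0\<^sub>v n) = 0 \<cdot>\<^sub>v \<phi> (0\<^sub>v n)" using assms by (metis rep_hom_def zero_carrier_vec)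
  also have "\<dots> = 0\<^sub>v d"
    using assms unfolding rep_hom_def by (metis carrier_vecD index_smult_vec eq_vecI index_zero_vec
        mult_zero_left zero_carrier_vec)
  finally show ?thesis .
qed

lemma rep_hom_image_submodule:
  assumes rep: "is_rep H n \<sigma>" and hom: "rep_hom H n \<sigma> d S \<phi>"
  shows "submodule_rep H d S (\<phi> ` carrier_vec n)"
  unfolding submodule_rep_def subsp_def
proof (intro conjI ballI allI)
  show "\<phi> ` carrier_vec n \<subseteq> carrier_vec d" using hom by (auto simp: rep_hom_def)
  show "0\<^sub>v d \<in> \<phi> ` carrier_vec n" using rep_hom_zero[OF hom] by (metis imageI zero_carrier_vec)
next
  fix a b assume "a \<in> \<phi> ` carrier_vec n" "b \<in> \<phi> ` carrier_vec n"
  then obtain u w where "u \<in> carrier_vec n" "w \<in> carrier_vec n" "a = \<phi> u" "b = \<phi> w" by blast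
  then show "a + b \<in> \<phi> ` carrier_vec n"
    using hom by (intro rev_image_eqI[of "u + w"]) (simp_all add: rep_hom_def)
next
  fix c a assume "a \<in> \<phi> ` carrier_vec n"
  then obtain u where "u \<in> carrier_vec n" "a = \<phi> u" by blast
  then show "c \<cdot>\<^sub>v a \<in> \<phi> ` carrier_vec n"
    using hom by (intro rev_image_eqI[of "c \<cdot>\<^sub>v u"]) (simp_all add: rep_hom_def)
next
  fix g a assume "g \<in> carrier H" "a \<in> \<phi> ` carrier_vec n"
  moreover from this obtain u where "u \<in> carrier_vec n" "a = \<phi> u" by blast
  ultimately show "S g *\<^sub>v a \<in> \<phi> ` carrier_vec n"
    using hom is_rep_mult_vec_carrier[OF rep]
    by (intro rev_image_eqI[of "\<sigma> g *\<^sub>v u"]) (simp_all add: rep_hom_def)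
qed

lemma rep_hom_kernel_submodule:
  assumes "is_rep H n \<sigma>" "is_rep H d S" "rep_hom H n \<sigma> d S \<phi>"
  shows "submodule_rep H n \<sigma> {u \<in> carrier_vec n. \<phi> u = 0\<^sub>v d}"
  using rep_hom_zero[OF assms(3)] is_rep_mult_vec_carrier[OF assms(1)] assms(3)
    mult_mat_zero_vec[OF is_rep_carrier[OF assms(2)]]
  by (auto simp: submodule_rep_def subsp_def rep_hom_def)

text \<open>The image of a nonzero homomorphism into a simple module is everything, so the target is the
  quotient of the source by the kernel.\<close>

lemma composition_factor_of_rep_hom:
  assumes rep: "is_rep H n \<sigma>" and simple: "simple_rep H d S" and hom: "rep_hom H n \<sigma> d S \<phi>"
    and "u\<^sub>0 \<in> carrier_vec n" "\<phi> u\<^sub>0 \<noteq> 0\<^sub>v d"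
  shows "composition_factor H n \<sigma> d S"
proof -
  have "\<phi> ` carrier_vec n \<noteq> {0\<^sub>v d}" using assms(4,5) by blast
  then have "\<phi> ` carrier_vec n = carrier_vec d"
    using simple rep_hom_image_submodule[OF rep hom] by (auto simp: simple_rep_def)
  moreover have "submodule_rep H n \<sigma> (carrier_vec n)"
    using is_rep_mult_vec_carrier[OF rep] by (auto simp: submodule_rep_def subsp_def)
  ultimately have "subquotient_iso H n \<sigma> {u \<in> carrier_vec n. \<phi> u = 0\<^sub>v d} (carrier_vec n) d S"
    unfolding subquotient_iso_def using rep_hom_kernel_submodule[OF rep _ hom] simple hom
    by (intro conjI exI[of _ \<phi>]) (auto simp: rep_hom_def simple_rep_def)
  then show ?thesis
    using simple by (auto simp: composition_factor_def)
qed

locale group_rep = group G for G :: "('g, 'b) monoid_scheme" (structure) +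
  fixes n :: nat and \<rho> :: "'g \<Rightarrow> 'f::field mat"
  assumes is_rep: "is_rep G n \<rho>"
begin

lemma rep_carrier [simp]: "g \<in> carrier G \<Longrightarrow> \<rho> g \<in> carrier_mat n n"
  using is_rep by (rule is_rep_carrier)

lemma rep_dim [simp]:
  assumes "g \<in> carrier G"
  shows "dim_row (\<rho> g) = n" "dim_col (\<rho> g) = n"
  using rep_carrier[OF assms] by auto

lemma rep_one [simp]: "\<rho> \<one> = 1\<^sub>m n"
  using is_rep by (rule is_rep_one)

lemma rep_mult: "g \<in> carrier G \<Longrightarrow> h \<in> carrier G \<Longrightarrow> \<rho> (g \<otimes> h) = \<rho> g * \<rho> h"
  using is_rep by (rule is_rep_mult)

lemma rep_inv_mult [simp]: "g \<in> carrier G \<Longrightarrow> \<rho> (inv g) * \<rho> g = 1\<^sub>m n"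
  by (metis inv_closed l_inv rep_mult rep_one)

lemma rep_mult_inv [simp]: "g \<in> carrier G \<Longrightarrow> \<rho> g * \<rho> (inv g) = 1\<^sub>m n"
  by (metis inv_closed r_inv rep_mult rep_one)

lemma rep_mult_vec:
  "g \<in> carrier G \<Longrightarrow> h \<in> carrier G \<Longrightarrow> u \<in> carrier_vec n \<Longrightarrow> \<rho> g *\<^sub>v (\<rho> h *\<^sub>v u) = \<rho> (g \<otimes> h) *\<^sub>v u"
  by (simp add: rep_mult assoc_mult_mat_vec[of _ n n _ n])

lemma rep_inv_mult_vec: "g \<in> carrier G \<Longrightarrow> u \<in> carrier_vec n \<Longrightarrow> \<rho> (inv g) *\<^sub>v (\<rho> g *\<^sub>v u) = u"
  by (simp add: rep_mult_vec)

lemma rep_mult_inv_vec: "g \<in> carrier G \<Longrightarrow> u \<in> carrier_vec n \<Longrightarrow> \<rho> g *\<^sub>v (\<rho> (inv g) *\<^sub>v u) = u"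
  by (simp add: rep_mult_vec)

lemma rep_mult_vec_carrier [simp]: "g \<in> carrier G \<Longrightarrow> u \<in> carrier_vec n \<Longrightarrow> \<rho> g *\<^sub>v u \<in> carrier_vec n"
  using is_rep by (rule is_rep_mult_vec_carrier)

lemma rep_zero_vec [simp]: "g \<in> carrier G \<Longrightarrow> \<rho> g *\<^sub>v 0\<^sub>v n = 0\<^sub>v n"
  by (simp add: mult_mat_zero_vec)

definition rep_ker :: "'g set" where
  "rep_ker = {g \<in> carrier G. \<rho> g = 1\<^sub>m n}"

lemma rep_ker_normal: "rep_ker \<lhd> G"
  unfolding normal_inv_iff
proof
  show "subgroup rep_ker G"
  proof (rule subgroupI)
    show "inv g \<in> rep_ker" if "g \<in> rep_ker" for g
      using that rep_inv_mult[of g] by (auto simp: rep_ker_def)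
  qed (auto simp: rep_ker_def rep_mult)
  show "\<forall>g\<in>carrier G. \<forall>k\<in>rep_ker. g \<otimes> k \<otimes> inv g \<in> rep_ker"
    by (auto simp: rep_ker_def rep_mult)
qed

lemma rep_ker_nat_pow: "g \<in> rep_ker \<Longrightarrow> g [^] (k::nat) \<in> rep_ker"
  by (induction k) (auto simp: rep_ker_def rep_mult)

definition fixed_vectors :: "'g set \<Rightarrow> 'f vec set" where
  "fixed_vectors K = {u \<in> carrier_vec n. \<forall>k\<in>K. \<rho> k *\<^sub>v u = u}"

lemma fixed_vectors_submodule:
  assumes "K \<lhd> G"
  shows "submodule_rep G n \<rho> (fixed_vectors K)"
proof -
  interpret K: normal K G by (rule assms)
  have KG: "k \<in> carrier G" if "k \<in> K" for k using that K.subset by blast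
  have "\<rho> g *\<^sub>v u \<in> fixed_vectors K" if g: "g \<in> carrier G" and u: "u \<in> fixed_vectors K" for g u
  proof -
    have "\<rho> k *\<^sub>v (\<rho> g *\<^sub>v u) = \<rho> g *\<^sub>v u" if k: "k \<in> K" for k
    proof -
      have conj: "inv g \<otimes> k \<otimes> g \<in> K" using K.inv_op_closed1 g k by blast
      have uc: "u \<in> carrier_vec n" using u by (simp add: fixed_vectors_def)
      have "\<rho> k *\<^sub>v (\<rho> g *\<^sub>v u) = \<rho> (k \<otimes> g) *\<^sub>v u"
        by (rule rep_mult_vec[OF KG[OF k] g uc])
      also have "k \<otimes> g = g \<otimes> (inv g \<otimes> k \<otimes> g)"
        using g KG[OF k] by (simp add: m_assoc[symmetric])
      also have "\<rho> (g \<otimes> (inv g \<otimes> k \<otimes> g)) *\<^sub>v u = \<rho> g *\<^sub>v (\<rho> (inv g \<otimes> k \<otimes> g) *\<^sub>v u)"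
        using g KG[OF conj] uc by (simp only: rep_mult_vec)
      also have "\<rho> (inv g \<otimes> k \<otimes> g) *\<^sub>v u = u" using conj u by (simp add: fixed_vectors_def)
      finally show ?thesis .
    qed
    then show ?thesis using g u by (simp add: fixed_vectors_def)
  qed
  moreover have "u + w \<in> fixed_vectors K" if "u \<in> fixed_vectors K" "w \<in> fixed_vectors K" for u w
    using that KG by (simp add: fixed_vectors_def mult_add_distrib_mat_vec[of _ n n])
  moreover have "a \<cdot>\<^sub>v u \<in> fixed_vectors K" if "u \<in> fixed_vectors K" for a u
    using that KG by (simp add: fixed_vectors_def mult_mat_vec[of _ n n])
  moreover have "0\<^sub>v n \<in> fixed_vectors K" using KG by (simp add: fixed_vectors_def)
  moreover have "fixed_vectors K \<subseteq> carrier_vec n" by (auto simp: fixed_vectors_def)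
  ultimately show ?thesis
    unfolding submodule_rep_def subsp_def by blast
qed

lemma invariant_set_group_action:
  assumes "W \<subseteq> carrier_vec n" and inv: "\<And>g w. g \<in> carrier G \<Longrightarrow> w \<in> W \<Longrightarrow> \<rho> g *\<^sub>v w \<in> W"
  shows "group_action G W (\<lambda>g. \<lambda>w\<in>W. \<rho> g *\<^sub>v w)"
  unfolding group_action_def group_hom_def group_hom_axioms_def
proof (intro conjI)
  show "group G" by (rule is_group)
  show "group (BijGroup W)" by (rule group_BijGroup)
  have bij: "(\<lambda>w\<in>W. \<rho> g *\<^sub>v w) \<in> Bij W" if g: "g \<in> carrier G" for g
  proof -
    have "bij_betw (\<lambda>w\<in>W. \<rho> g *\<^sub>v w) W W"
      by (rule bij_betw_byWitness[where f'="\<lambda>w\<in>W. \<rho> (inv g) *\<^sub>v w"])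
        (use g inv assms(1) in \<open>auto simp: rep_inv_mult_vec rep_mult_inv_vec subsetD\<close>)
    then show ?thesis unfolding Bij_def by simp
  qed
  show "(\<lambda>g. \<lambda>w\<in>W. \<rho> g *\<^sub>v w) \<in> hom G (BijGroup W)"
  proof (rule homI)
    fix g h assume g: "g \<in> carrier G" and h: "h \<in> carrier G"
    show "(\<lambda>w\<in>W. \<rho> (g \<otimes> h) *\<^sub>v w) =
        (\<lambda>w\<in>W. \<rho> g *\<^sub>v w) \<otimes>\<^bsub>BijGroup W\<^esub> (\<lambda>w\<in>W. \<rho> h *\<^sub>v w)"
      using bij g h inv assms(1)
      by (auto simp: BijGroup_def compose_def rep_mult_vec subsetD)
  qed (simp add: BijGroup_def bij)
qed

end

locale finite_group_rep = group_rep G n \<rho>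
  for G :: "('g, 'b) monoid_scheme" (structure) and n and \<rho> :: "'g \<Rightarrow> 'f::field mat" +
  assumes finite_carrier: "finite (carrier G)"
begin

lemma finite_group_rep_subgroup:
  assumes "subgroup K G"
  shows "finite_group_rep (G\<lparr>carrier := K\<rparr>) n \<rho>"
proof -
  have "is_rep (G\<lparr>carrier := K\<rparr>) n \<rho>"
    using is_rep assms subgroup.subset unfolding is_rep_def by fastforce
  moreover have "finite (carrier (G\<lparr>carrier := K\<rparr>))"
    using finite_carrier assms subgroup.subset finite_subset by fastforce
  ultimately show ?thesis
    using subgroup_imp_group[OF assms]
    by (simp add: finite_group_rep_def finite_group_rep_axioms_def group_rep_def group_rep_axioms_def)
qed

definition prime_span_orbit :: "'f vec \<Rightarrow> 'f vec set" where
  "prime_span_orbit v =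
    (\<lambda>c. vec n (\<lambda>i. \<Sum>x\<in>carrier G. c x * (\<rho> x *\<^sub>v v) $ i)) ` (carrier G \<rightarrow>\<^sub>E prime_subfield)"

lemma prime_span_orbit_carrier: "prime_span_orbit v \<subseteq> carrier_vec n"
  unfolding prime_span_orbit_def by auto

lemma finite_prime_span_orbit: "CHAR('f) > 0 \<Longrightarrow> finite (prime_span_orbit v)"
  unfolding prime_span_orbit_def
  by (intro finite_imageI finite_PiE finite_carrier finite_prime_subfield)

lemma zero_in_prime_span_orbit: "0\<^sub>v n \<in> prime_span_orbit v"
proof -
  have "0\<^sub>v n = vec n (\<lambda>i. \<Sum>x\<in>carrier G. (\<lambda>x\<in>carrier G. 0) x * (\<rho> x *\<^sub>v v) $ i)"
    by (intro eq_vecI) auto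
  moreover have "(\<lambda>x\<in>carrier G. 0) \<in> carrier G \<rightarrow>\<^sub>E prime_subfield"
    using prime_subfield_zero by auto
  ultimately show ?thesis unfolding prime_span_orbit_def by blast
qed

lemma prime_span_orbit_translate:
  assumes "v \<in> carrier_vec n" "w \<in> prime_span_orbit v" "a \<in> prime_subfield"
  shows "w + a \<cdot>\<^sub>v v \<in> prime_span_orbit v"
proof -
  obtain c where c: "c \<in> carrier G \<rightarrow>\<^sub>E prime_subfield"
    and w: "w = vec n (\<lambda>i. \<Sum>x\<in>carrier G. c x * (\<rho> x *\<^sub>v v) $ i)"
    using assms(2) unfolding prime_span_orbit_def by auto
  define c' where "c' = (\<lambda>x\<in>carrier G. c x + (if x = \<one> then a else 0))"
  have "c' \<in> carrier G \<rightarrow>\<^sub>E prime_subfield"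
    using c assms(3) prime_subfield_add prime_subfield_zero by (auto simp: c'_def PiE_iff)
  moreover have "w + a \<cdot>\<^sub>v v = vec n (\<lambda>i. \<Sum>x\<in>carrier G. c' x * (\<rho> x *\<^sub>v v) $ i)"
    using assms(1) finite_carrier
    by (intro eq_vecI) (auto simp: w c'_def distrib_right sum.distrib if_distrib[of "\<lambda>y. y * _"] cong: if_cong)
  ultimately show ?thesis unfolding prime_span_orbit_def by blast
qed

lemma prime_span_orbit_invariant:
  assumes "v \<in> carrier_vec n" "g \<in> carrier G" "w \<in> prime_span_orbit v"
  shows "\<rho> g *\<^sub>v w \<in> prime_span_orbit v"
proof -
  obtain c where c: "c \<in> carrier G \<rightarrow>\<^sub>E prime_subfield"
    and w: "w = vec n (\<lambda>i. \<Sum>x\<in>carrier G. c x * (\<rho> x *\<^sub>v v) $ i)"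
    using assms(3) unfolding prime_span_orbit_def by auto
  define c' where "c' = (\<lambda>x\<in>carrier G. c (inv g \<otimes> x))"
  have "c' \<in> carrier G \<rightarrow>\<^sub>E prime_subfield"
    using c assms(2) by (auto simp: c'_def)
  moreover have "\<rho> g *\<^sub>v w = vec n (\<lambda>i. \<Sum>x\<in>carrier G. c' x * (\<rho> x *\<^sub>v v) $ i)"
  proof -
    have "\<rho> g *\<^sub>v w = vec n (\<lambda>i. \<Sum>x\<in>carrier G. c x * (\<rho> (g \<otimes> x) *\<^sub>v v) $ i)"
      unfolding w using assms(1,2) by (subst mult_mat_vec_lincomb[of _ n n]) (auto simp: rep_mult_vec)
    also have "\<dots> = vec n (\<lambda>i. \<Sum>x\<in>carrier G. c' x * (\<rho> x *\<^sub>v v) $ i)"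
      using assms(2)
      by (intro arg_cong[where f="vec n"] ext sum.reindex_bij_witness[where j="\<lambda>x. g \<otimes> x" and i="\<lambda>x. inv g \<otimes> x"])
        (auto simp: c'_def m_assoc[symmetric])
    finally show ?thesis .
  qed
  ultimately show ?thesis unfolding prime_span_orbit_def by blast
qed

text \<open>Apply the fixed-point congruence to the finite \<open>\<bbbF>\<^sub>p\<close>-span of an orbit, whose size is divisible
  by \<open>p\<close>.\<close>

lemma p_group_fixed_vector:
  assumes pos: "CHAR('f) > 0" and ord_p: "\<And>x. x \<in> carrier G \<Longrightarrow> \<exists>a. ord x = CHAR('f) ^ a"
    and "n > 0"
  obtains w where "w \<in> carrier_vec n" "w \<noteq> 0\<^sub>v n" "\<And>g. g \<in> carrier G \<Longrightarrow> \<rho> g *\<^sub>v w = w"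
proof -
  define v :: "'f vec" where "v = unit_vec n 0"
  have v: "v \<in> carrier_vec n" "v \<noteq> 0\<^sub>v n" using \<open>n > 0\<close> by (auto simp: v_def)
  define W where "W = prime_span_orbit v"
  have W: "W \<subseteq> carrier_vec n" "finite W" "0\<^sub>v n \<in> W"
    unfolding W_def using prime_span_orbit_carrier finite_prime_span_orbit[OF pos] zero_in_prime_span_orbit
    by auto
  have "group_action G W (\<lambda>g. \<lambda>w\<in>W. \<rho> g *\<^sub>v w)"
    using W(1) prime_span_orbit_invariant[OF v(1)] unfolding W_def by (rule invariant_set_group_action)
  moreover have "CHAR('f) dvd card W"
    using pos W(2,1) v prime_span_orbit_translate[OF v(1)] unfolding W_def
    by (rule char_dvd_card_translation_closed)
  moreover have "(\<lambda>w\<in>W. \<rho> g *\<^sub>v w) (0\<^sub>v n) = 0\<^sub>v n" if "g \<in> carrier G" for g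
    using that W(3) by simp
  ultimately obtain w where "w \<in> W" "w \<noteq> 0\<^sub>v n" "\<And>g. g \<in> carrier G \<Longrightarrow> (\<lambda>w\<in>W. \<rho> g *\<^sub>v w) w = w"
    using group_action.p_group_another_fixed_point[OF _ finite_carrier W(2) prime_CHAR_semidom[OF pos] ord_p _ W(3)]
    by blast
  then show ?thesis using that W(1) by auto
qed

text \<open>The kernel is a normal \<open>p\<close>-subgroup, so its fixed vectors in a simple module form a nonzero
  submodule, i.e.\ everything.\<close>

lemma simple_rep_trivial_on_p_kernel:
  fixes S :: "'g \<Rightarrow> 'f mat"
  assumes simple: "simple_rep G d S"
    and ord_p: "\<And>k. k \<in> rep_ker \<Longrightarrow> \<exists>a. ord k = CHAR('f) ^ a"
    and k: "k \<in> rep_ker"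
  shows "S k = 1\<^sub>m d"
proof -
  interpret S: finite_group_rep G d S
    using simple finite_carrier by unfold_locales (simp_all add: simple_rep_def)
  have kG: "k \<in> carrier G" using k by (simp add: rep_ker_def)
  show ?thesis
  proof (cases "CHAR('f) = 0")
    case True
    obtain a where "ord k = CHAR('f) ^ a" using ord_p[OF k] by blast
    then have "ord k \<le> 1" using True by (simp add: power_0_left)
    then have "ord k = 1" using ord_ge_1[OF finite_carrier kG] by linarith
    then have "k = \<one>" using ord_eq_1[OF kG] by blast
    then show ?thesis by simp
  next
    case False
    have K: "subgroup rep_ker G" using rep_ker_normal by (rule normal_imp_subgroup)
    interpret K: finite_group_rep "G\<lparr>carrier := rep_ker\<rparr>" d S
      by (rule S.finite_group_rep_subgroup[OF K])
    have "d > 0" using simple by (simp add: simple_rep_def)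
    then obtain w where w: "w \<in> carrier_vec d" "w \<noteq> 0\<^sub>v d" and fixed: "\<And>g. g \<in> rep_ker \<Longrightarrow> S g *\<^sub>v w = w"
      using K.p_group_fixed_vector False ord_p ord_subgroup[OF K] by auto
    have "S.fixed_vectors rep_ker = carrier_vec d"
      using simple S.fixed_vectors_submodule[OF rep_ker_normal] w fixed
      unfolding simple_rep_def S.fixed_vectors_def by blast
    then have "S k *\<^sub>v u = 1\<^sub>m d *\<^sub>v u" if "u \<in> carrier_vec d" for u
      using that k unfolding S.fixed_vectors_def by auto
    then show ?thesis using kG by (intro mat_eq_on_carrier_vecI[of _ d d]) auto
  qed
qed

end

section \<open>Simple modules as quotients of tensor sums\<close>

locale simple_over_kernel = finite_group_rep G n \<rho>
  for G :: "('g, 'b) monoid_scheme" (structure) and n and \<rho> :: "'g \<Rightarrow> 'f::field mat" +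
  fixes d :: nat and S :: "'g \<Rightarrow> 'f mat"
  assumes simple: "simple_rep G d S"
    and trivial_on_rep_ker: "\<And>k. k \<in> rep_ker \<Longrightarrow> S k = 1\<^sub>m d"
begin

sublocale S: group_rep G d S
  using simple by unfold_locales (simp add: simple_rep_def)

lemma S_eq_if_rep_eq:
  assumes "h \<in> carrier G" "h' \<in> carrier G" "\<rho> h = \<rho> h'"
  shows "S h = S h'"
proof -
  have "\<rho> (inv h' \<otimes> h) = \<rho> (inv h' \<otimes> h')" using assms by (simp add: rep_mult)
  then have "inv h' \<otimes> h \<in> rep_ker" using assms by (simp add: rep_ker_def)
  then have "S (inv h' \<otimes> h) = 1\<^sub>m d" by (rule trivial_on_rep_ker)
  moreover have "h = h' \<otimes> (inv h' \<otimes> h)" using assms by (simp add: m_assoc[symmetric])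
  ultimately show ?thesis
    using assms right_mult_one_mat[OF S.rep_carrier[OF assms(2)]] by (metis S.rep_mult inv_closed m_closed)
qed

definition preimage :: "'f mat \<Rightarrow> 'g" where
  "preimage M = (SOME h. h \<in> carrier G \<and> \<rho> h = M)"

lemma preimage_rep: "h \<in> carrier G \<Longrightarrow> preimage (\<rho> h) \<in> carrier G \<and> \<rho> (preimage (\<rho> h)) = \<rho> h"
  unfolding preimage_def by (rule someI) simp

definition coeff :: "'f mat \<Rightarrow> 'f vec" where
  "coeff M = S (inv (preimage M)) *\<^sub>v unit_vec d 0"

lemma coeff_rep:
  assumes "h \<in> carrier G"
  shows "coeff (\<rho> h) = S (inv h) *\<^sub>v unit_vec d 0"
proof -
  obtain h' where h': "h' = preimage (\<rho> h)" "h' \<in> carrier G" "\<rho> h' = \<rho> h"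
    using preimage_rep[OF assms] by blast
  have "\<rho> (inv h') = \<rho> (inv h') * (\<rho> h * \<rho> (inv h))"
    using assms right_mult_one_mat[OF rep_carrier[OF inv_closed[OF h'(2)]]]
    by (simp flip: rep_mult)
  also have "\<dots> = (\<rho> (inv h') * \<rho> h') * \<rho> (inv h)"
    using assms h' by (simp add: assoc_mult_mat[of _ n n _ n _ n])
  also have "\<dots> = \<rho> (inv h)"
    using assms h'(2) by (simp flip: rep_mult)
  finally show ?thesis
    unfolding coeff_def using S_eq_if_rep_eq[of "inv h'" "inv h"] assms h' by simp
qed

text \<open>The equivariant map \<open>u \<mapsto> \<Sum>\<^sub>h l(A(h) u) S(h)\<^sup>-\<^sup>1 v\<close>, with \<open>A\<close> the tensor sum; the sum runs
  over the image \<open>\<rho> ` carrier G\<close> rather than over \<open>G\<close>, so that no factor \<open>|ker \<rho>|\<close>, which may vanish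
  in \<open>'f\<close>, appears.\<close>

definition coeff_map :: "nat \<Rightarrow> 'f vec \<Rightarrow> 'f vec \<Rightarrow> 'f vec" where
  "coeff_map t l u = vec d (\<lambda>i. \<Sum>M\<in>\<rho> ` carrier G. (l \<bullet> (tensor_sum (\<lambda>M. M) n t M *\<^sub>v u)) * coeff M $ i)"

lemma coeff_mult_rep:
  assumes "M \<in> \<rho> ` carrier G" "g \<in> carrier G"
  shows "S g *\<^sub>v coeff (M * \<rho> g) = coeff M"
proof -
  obtain h where h: "h \<in> carrier G" "M = \<rho> h" using assms(1) by blast
  have "M * \<rho> g = \<rho> (h \<otimes> g)" using h assms(2) by (simp add: rep_mult)
  then have "S g *\<^sub>v coeff (M * \<rho> g) = S g *\<^sub>v (S (inv g \<otimes> inv h) *\<^sub>v unit_vec d 0)"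
    using h assms(2) by (simp add: coeff_rep inv_mult_group)
  also have "\<dots> = S (inv h) *\<^sub>v unit_vec d 0"
    using h assms(2) by (simp add: S.rep_mult_vec m_assoc[symmetric])
  finally show ?thesis using h by (simp add: coeff_rep)
qed

lemma coeff_map_carrier: "coeff_map t l u \<in> carrier_vec d"
  by (simp add: coeff_map_def)

lemma tensor_sum_rep_image_carrier:
  "M \<in> \<rho> ` carrier G \<Longrightarrow> tensor_sum (\<lambda>M. M) n t M \<in> carrier_mat (\<Sum>k\<le>t. n^k) (\<Sum>k\<le>t. n^k)"
  by (auto intro!: tensor_sum_carrier)

context
  fixes t :: nat and l :: "'f vec"
  assumes l: "l \<in> carrier_vec (\<Sum>k\<le>t. n^k)"
begin

lemma coeff_map_add:
  assumes "u \<in> carrier_vec (\<Sum>k\<le>t. n^k)" "w \<in> carrier_vec (\<Sum>k\<le>t. n^k)"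
  shows "coeff_map t l (u + w) = coeff_map t l u + coeff_map t l w"
proof -
  have "l \<bullet> (tensor_sum (\<lambda>M. M) n t M *\<^sub>v (u + w)) =
      l \<bullet> (tensor_sum (\<lambda>M. M) n t M *\<^sub>v u) + l \<bullet> (tensor_sum (\<lambda>M. M) n t M *\<^sub>v w)"
    if "M \<in> \<rho> ` carrier G" for M
    using assms l tensor_sum_rep_image_carrier[where t = t, OF that]
    by (simp add: mult_add_distrib_mat_vec scalar_prod_add_distrib[of _ "\<Sum>k\<le>t. n^k"])
  then show ?thesis
    by (intro eq_vecI) (simp_all add: coeff_map_def distrib_right sum.distrib cong: sum.cong)
qed

lemma coeff_map_smult:
  assumes "u \<in> carrier_vec (\<Sum>k\<le>t. n^k)"
  shows "coeff_map t l (a \<cdot>\<^sub>v u) = a \<cdot>\<^sub>v coeff_map t l u"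
proof -
  have "l \<bullet> (tensor_sum (\<lambda>M. M) n t M *\<^sub>v (a \<cdot>\<^sub>v u)) = a * (l \<bullet> (tensor_sum (\<lambda>M. M) n t M *\<^sub>v u))"
    if "M \<in> \<rho> ` carrier G" for M
    using assms l tensor_sum_rep_image_carrier[where t = t, OF that] by (simp add: mult_mat_vec)
  then show ?thesis
    by (intro eq_vecI) (simp_all add: coeff_map_def sum_distrib_left mult.assoc cong: sum.cong)
qed

lemma coeff_map_equivariant:
  assumes g: "g \<in> carrier G" and u: "u \<in> carrier_vec (\<Sum>k\<le>t. n^k)"
  shows "coeff_map t l (tensor_sum \<rho> n t g *\<^sub>v u) = S g *\<^sub>v coeff_map t l u"
proof -
  let ?T = "tensor_sum (\<lambda>M. M) n t" and ?R = "\<rho> ` carrier G"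
  have shift: "?T M *\<^sub>v (tensor_sum \<rho> n t g *\<^sub>v u) = ?T (M * \<rho> g) *\<^sub>v u" if "M \<in> ?R" for M
  proof -
    have M: "M \<in> carrier_mat n n" using that by auto
    have "?T M *\<^sub>v (tensor_sum \<rho> n t g *\<^sub>v u) = (?T M * ?T (\<rho> g)) *\<^sub>v u"
      using assoc_mult_mat_vec[OF tensor_sum_carrier[OF M] tensor_sum_carrier[OF rep_carrier[OF g]] u]
      by (simp add: tensor_sum_apply[of \<rho>])
    also have "\<dots> = ?T (M * \<rho> g) *\<^sub>v u" using M g by (simp add: tensor_sum_mult)
    finally show ?thesis .
  qed
  have "(\<Sum>M\<in>?R. (l \<bullet> (?T M *\<^sub>v (tensor_sum \<rho> n t g *\<^sub>v u))) * coeff M $ i) =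
      (\<Sum>M\<in>?R. (l \<bullet> (?T M *\<^sub>v u)) * (S g *\<^sub>v coeff M) $ i)" for i
  proof (rule sum.reindex_bij_witness[where j="\<lambda>M. M * \<rho> g" and i="\<lambda>M. M * \<rho> (inv g)"])
    fix M assume "M \<in> ?R"
    then obtain h where h: "h \<in> carrier G" "M = \<rho> h" by blast
    show "M * \<rho> g * \<rho> (inv g) = M" "M * \<rho> (inv g) * \<rho> g = M"
      using h g by (simp_all add: assoc_mult_mat[of _ n n _ n _ n])
    show "M * \<rho> g \<in> ?R" "M * \<rho> (inv g) \<in> ?R"
      using h g by (simp_all add: rep_mult[symmetric])
    show "(l \<bullet> (?T (M * \<rho> g) *\<^sub>v u)) * (S g *\<^sub>v coeff (M * \<rho> g)) $ i =
        (l \<bullet> (?T M *\<^sub>v (tensor_sum \<rho> n t g *\<^sub>v u))) * coeff M $ i"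
      using \<open>M \<in> ?R\<close> g by (simp add: shift coeff_mult_rep)
  qed
  then show ?thesis
    unfolding coeff_map_def using g coeff_rep
    by (subst mult_mat_vec_lincomb[of _ d d]) auto
qed

lemma rep_hom_coeff_map: "rep_hom G (\<Sum>k\<le>t. n^k) (tensor_sum \<rho> n t) d S (coeff_map t l)"
  unfolding rep_hom_def
  by (simp add: coeff_map_carrier coeff_map_add coeff_map_smult coeff_map_equivariant)

end

text \<open>If all these maps vanished, the coordinates of \<open>coeff\<close> would be orthogonal to every entry function
  of the tensor powers, hence zero by \<open>orthogonal_tensor_entries_imp_zero\<close>; but \<open>coeff (1\<^sub>m n) \<noteq> 0\<close>.\<close>

lemma coeff_map_nonzero:
  assumes "card (carrier G) \<le> Suc t"
  obtains l u where "l \<in> carrier_vec (\<Sum>k\<le>t. n^k)" "u \<in> carrier_vec (\<Sum>k\<le>t. n^k)" "coeff_map t l u \<noteq> 0\<^sub>v d"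
proof -
  let ?D = "\<Sum>k\<le>t. n^k" and ?R = "\<rho> ` carrier G"
  have "\<exists>l\<in>carrier_vec ?D. \<exists>u\<in>carrier_vec ?D. coeff_map t l u \<noteq> 0\<^sub>v d"
  proof (rule ccontr)
    assume "\<not> ?thesis"
    then have vanish: "coeff_map t l u = 0\<^sub>v d" if "l \<in> carrier_vec ?D" "u \<in> carrier_vec ?D" for l u
      using that by blast
    have "coeff (\<rho> \<one>) $ i = 0" if i: "i < d" for i
    proof (rule orthogonal_tensor_entries_imp_zero)
      show "finite ?R" "?R \<subseteq> carrier_mat n n"
        using finite_carrier by auto
      show "\<rho> \<one> \<in> ?R" by (rule imageI) simp
      show "card ?R \<le> Suc t" using assms card_image_le[OF finite_carrier, of \<rho>] by linarith
      fix k I J assume k: "k \<le> t" and IJ: "I < n^k" "J < n^k"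
      let ?o = "\<Sum>l<k. n^l"
      have o: "?o + I < ?D" "?o + J < ?D" using sum_lessThan_power_add_le[OF k, of n] IJ by auto
      have "unit_vec ?D (?o + I) \<bullet> (tensor_sum (\<lambda>M. M) n t M *\<^sub>v unit_vec ?D (?o + J)) =
          tensor_pow (\<lambda>M. M) k M $$ (I, J)" if "M \<in> ?R" for M
        using that o k IJ
        by (auto simp: unit_vec_scalar_prod_mult_mat_vec tensor_sum_carrier index_tensor_sum)
      moreover have "coeff_map t (unit_vec ?D (?o + I)) (unit_vec ?D (?o + J)) $ i = 0"
        using vanish[of "unit_vec ?D (?o + I)" "unit_vec ?D (?o + J)"] i by simp
      ultimately show "(\<Sum>M\<in>?R. tensor_pow (\<lambda>M. M) k M $$ (I, J) * coeff M $ i) = 0"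
        using i by (simp add: coeff_map_def cong: sum.cong)
    qed
    moreover have "coeff (\<rho> \<one>) = unit_vec d 0"
      using coeff_rep[of \<one>] by simp
    moreover have "d > 0" using simple by (simp add: simple_rep_def)
    ultimately show False by (metis index_unit_vec(2) one_neq_zero)
  qed
  then show ?thesis using that by blast
qed

theorem composition_factor_tensor_sum:
  assumes "card (carrier G) \<le> Suc t"
  shows "composition_factor G (\<Sum>k\<le>t. n^k) (tensor_sum \<rho> n t) d S"
proof -
  obtain l u where "l \<in> carrier_vec (\<Sum>k\<le>t. n^k)" "u \<in> carrier_vec (\<Sum>k\<le>t. n^k)" "coeff_map t l u \<noteq> 0\<^sub>v d"
    using coeff_map_nonzero[OF assms] by blast
  then show ?thesis
    by (rule composition_factor_of_rep_hom[OF is_rep_tensor_sum[OF is_rep] simple rep_hom_coeff_map])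
qed

end

section \<open>The quotient by the subgroup generated by the \<open>p\<close>-regular kernel\<close>

context finite_group_rep
begin

definition regular_kernel :: "'g set" where
  "regular_kernel = generate G {g \<in> carrier G. \<rho> g = 1\<^sub>m n \<and> (of_nat (ord g) :: 'f) \<noteq> 0}"

lemma regular_kernel_normal: "regular_kernel \<lhd> G"
  unfolding regular_kernel_def
proof (rule normal_generateI)
  fix h g assume h: "h \<in> {g \<in> carrier G. \<rho> g = 1\<^sub>m n \<and> (of_nat (ord g) :: 'f) \<noteq> 0}" and g: "g \<in> carrier G"
  then have "g \<otimes> h \<otimes> inv g \<in> rep_ker"
    using rep_ker_normal by (auto simp: rep_ker_def normal_inv_iff)
  then show "g \<otimes> h \<otimes> inv g \<in> {g \<in> carrier G. \<rho> g = 1\<^sub>m n \<and> (of_nat (ord g) :: 'f) \<noteq> 0}"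
    using h g by (simp add: rep_ker_def ord_conj)
qed auto

lemma regular_kernel_subset_rep_ker: "regular_kernel \<subseteq> rep_ker"
  unfolding regular_kernel_def
  by (rule generate_subgroup_incl[OF _ normal_imp_subgroup[OF rep_ker_normal]]) (auto simp: rep_ker_def)

definition rep_mod :: "'g set \<Rightarrow> 'f mat" where
  "rep_mod C = the_elem (\<rho> ` C)"

lemma rep_mod_coset: "g \<in> carrier G \<Longrightarrow> rep_mod (regular_kernel #> g) = \<rho> g"
proof -
  assume g: "g \<in> carrier G"
  interpret N: normal regular_kernel G by (rule regular_kernel_normal)
  have "\<rho> ` (regular_kernel #> g) = {\<rho> g}"
  proof
    show "\<rho> ` (regular_kernel #> g) \<subseteq> {\<rho> g}"
      using g regular_kernel_subset_rep_ker
      by (auto simp: r_coset_def rep_ker_def rep_mult N.subset[THEN subsetD])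
    show "{\<rho> g} \<subseteq> \<rho> ` (regular_kernel #> g)"
      using rcos_self[OF g N.subgroup_axioms] by blast
  qed
  then show ?thesis by (simp add: rep_mod_def)
qed

lemma finite_group_rep_mod: "finite_group_rep (G Mod regular_kernel) n rep_mod"
proof -
  interpret N: normal regular_kernel G by (rule regular_kernel_normal)
  have "rep_mod regular_kernel = 1\<^sub>m n"
    using rep_mod_coset[OF one_closed] coset_mult_one[OF N.subset] by simp
  then have "is_rep (G Mod regular_kernel) n rep_mod"
    unfolding is_rep_def carrier_FactGroup by (auto simp: rep_mod_coset N.rcos_sum rep_mult)
  then show ?thesis
    using N.factorgroup_is_group finite_carrier
    by (simp add: finite_group_rep_def finite_group_rep_axioms_def group_rep_def group_rep_axioms_def
        carrier_FactGroup)
qed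

text \<open>The \<open>p\<close>-regular part of an element of the kernel lies in \<open>regular_kernel\<close>. In characteristic
  \<open>0\<close> the conclusion says that the order is \<open>0\<^sup>0 = 1\<close>.\<close>

lemma rep_mod_ker_ord:
  assumes C: "C \<in> carrier (G Mod regular_kernel)" and ker: "rep_mod C = 1\<^sub>m n"
  shows "\<exists>a. group.ord (G Mod regular_kernel) C = CHAR('f) ^ a"
proof -
  interpret N: normal regular_kernel G by (rule regular_kernel_normal)
  interpret Q: group "G Mod regular_kernel" by (rule N.factorgroup_is_group)
  obtain g where g: "g \<in> carrier G" and Cg: "C = regular_kernel #> g"
    using C unfolding carrier_FactGroup by auto
  define q where "q = CHAR('f) ^ multiplicity CHAR('f) (ord g)"
  have "\<not> CHAR('f) dvd ord (g [^] q)"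
    unfolding q_def using not_dvd_ord_pow_multiplicity[OF finite_carrier g] by simp
  moreover have "g [^] q \<in> rep_ker"
    using g ker Cg by (intro rep_ker_nat_pow) (simp add: rep_ker_def rep_mod_coset)
  ultimately have "g [^] q \<in> regular_kernel"
    unfolding regular_kernel_def rep_ker_def by (intro generate.incl) (simp add: of_nat_eq_0_iff_char_dvd)
  then have "C [^]\<^bsub>G Mod regular_kernel\<^esub> q = \<one>\<^bsub>G Mod regular_kernel\<^esub>"
    using g Cg N.FactGroup_pow[OF g, of q] N.rcos_const[OF is_group] by (simp add: FactGroup_def)
  then have "Q.ord C dvd q" using C Q.pow_eq_id by blast
  moreover have "q \<noteq> 0"
    unfolding q_def using ord_ge_1[OF finite_carrier g] multiplicity_dvd[of "CHAR('f)" "ord g"]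
    by (metis dvd_0_left_iff not_one_le_zero)
  ultimately show ?thesis unfolding q_def by (rule dvd_CHAR_power_imp_CHAR_power)
qed

lemma rich_tensor_sum_rep_mod:
  assumes "card (carrier (G Mod regular_kernel)) \<le> Suc t"
  shows "rich (G Mod regular_kernel) (\<Sum>k\<le>t. n^k) (tensor_sum rep_mod n t)"
  unfolding rich_def
proof (intro allI impI)
  interpret Q: finite_group_rep "G Mod regular_kernel" n rep_mod by (rule finite_group_rep_mod)
  fix d and S :: "'g set \<Rightarrow> 'f mat" assume simple: "simple_rep (G Mod regular_kernel) d S"
  have "S C = 1\<^sub>m d" if "C \<in> Q.rep_ker" for C
    by (rule Q.simple_rep_trivial_on_p_kernel[OF simple _ that])
      (use rep_mod_ker_ord in \<open>auto simp: Q.rep_ker_def\<close>)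
  then interpret simple_over_kernel "G Mod regular_kernel" n rep_mod d S
    using simple by unfold_locales
  show "composition_factor (G Mod regular_kernel) (\<Sum>k\<le>t. n^k) (tensor_sum rep_mod n t) d S"
    by (rule composition_factor_tensor_sum[OF assms])
qed
end

theorem proposition7p5:
  fixes G :: "('g, 'b) monoid_scheme" and \<rho> :: "'g \<Rightarrow> 'f::field mat" and n :: nat
  assumes "group G" and "finite (carrier G)"
    and "alg_closed TYPE('f)"
    and "is_rep G n \<rho>"
  defines "N \<equiv> generate G {g \<in> carrier G. \<rho> g = 1\<^sub>m n \<and> (of_nat (group.ord G g) :: 'f) \<noteq> 0}"
  shows "N \<lhd> G \<and>
    (\<exists>\<rho>b. is_rep (G Mod N) n \<rho>b \<and> (\<forall>g\<in>carrier G. \<rho> g = \<rho>b (N #>\<^bsub>G\<^esub> g)) \<and>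
          tensor_rich (G Mod N) n \<rho>b)"
proof -
  interpret finite_group_rep G n \<rho>
    using assms by (simp add: finite_group_rep_def finite_group_rep_axioms_def group_rep_def group_rep_axioms_def)
  interpret Q: finite_group_rep "G Mod regular_kernel" n rep_mod by (rule finite_group_rep_mod)
  have N: "N = regular_kernel" unfolding N_def regular_kernel_def ..
  define t where "t = card (carrier (G Mod N))"
  have "t > 0"
    unfolding t_def N using Q.finite_carrier Q.one_closed card_gt_0_iff by blast
  moreover have "rich (G Mod N) (\<Sum>k\<le>t. n^k) (tensor_sum rep_mod n t)"
    unfolding N by (rule rich_tensor_sum_rep_mod) (simp add: t_def N)
  ultimately show ?thesis
    using regular_kernel_normal rep_mod_coset Q.is_rep unfolding tensor_rich_def N by auto
qed

end
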